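(* Let $\mathbb{V}=V\times\{0\}$ be a horizontal homogeneous subgroup of $\mathbb{H}^n$ with $k=\dim V$, and let $\pi_{\mathbb{V}^\perp}\colon\mathbb{H}^n\to\mathbb{V}^\perp$ be the projection associated with $\mathbb{H}^n=\mathbb{V}^\perp\ltimes\mathbb{V}$. Equip $\mathbb{H}^n$ with the Korányi metric and $\mathbb{V}^\perp$ with the Euclidean metric of $\mathbb{R}^{2n+1}$. Then $\pi_{\mathbb{V}^\perp}$ is locally David–Semmes $(k+1)$-regular, i.e. $(\mathbb{H}^n,(\mathbb{V}^\perp,d_{\mathbb{R}^{2n+1}}),\pi_{\mathbb{V}^\perp})$ is a $(k+1)$-foliation.
   Context: $\mathbb{H}^n=\mathbb{R}^{2n}\times\mathbb{R}$ with group law $(x,t)*(x',t')=(x+x',t+t'+2\omega(x,x'))$, $\omega(x,x')=\sum_{i=1}^n(x_{n+i}x'_i-x_ix'_{n+i})$, Korányi metric $d_{\mathbb{H}}(p,q)=\|p^{-1}*q\|_{\mathbb{H}}$, $\|(x,t)\|_{\mathbb{H}}=(|x|^4+t^2)^{1/4}$. Horizontal homogeneous subgroup: $\mathbb{V}=V\times\{0\}$ with $V\subseteq\mathbb{R}^{2n}$ a subspace on which $\omega\equiv0$; $\mathbb{V}^\perp=V^\perp\times\mathbb{R}$. Writing uniquely $p=p_{\mathbb{V}^\perp}*p_{\mathbb{V}}$, set $\pi_{\mathbb{V}^\perp}(p)=p_{\mathbb{V}^\perp}$; its fibers are the left cosets $a*\mathbb{V}$. A surjection $\pi\colon X\to W$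 between proper metric spaces is locally David–Semmes $s$-regular if for every compact $K\subseteq X$, $\pi|_K$ is Lipschitz and there are $C\ge1$, $r_0>0$ such that for every ball $B\subseteq W$ of radius $r<r_0$, $\pi^{-1}(B)\cap K$ can be covered by at most $Cr^{-s}$ balls in $X$ of radius $Cr$; $(X,W,\pi)$ is then an $s$-foliation. *)

theory Defs
  imports "HOL-Analysis.Analysis"
begin

text \<open>Points of R^{2n} are pairs (a,b) of vectors in R^n, with x_i = a_i and
  x_{n+i} = b_i.
  The dimension n is the cardinality of the finite index type 'n.\<close>

type_synonym 'n hvec = "(real^'n) \<times> (real^'n)"
type_synonym 'n heis = "'n hvec \<times> real"

definition omega :: "'n::finite hvec \<Rightarrow> 'n hvec \<Rightarrow> real" where
  "omega x y = (\<Sum>i\<in>UNIV. (snd x) $ i * (fst y) $ i - (fst x) $ i * (snd y) $ i)"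

definition hmult :: "'n::finite heis \<Rightarrow> 'n heis \<Rightarrow> 'n heis" where
  "hmult p q = (fst p + fst q, snd p + snd q + 2 * omega (fst p) (fst q))"

definition hinv :: "'n::finite heis \<Rightarrow> 'n heis" where
  "hinv p = (- fst p, - snd p)"

definition koranyi_norm :: "'n::finite heis \<Rightarrow> real" where
  "koranyi_norm p = root 4 (norm (fst p) ^ 4 + (snd p)\<^sup>2)"

definition koranyi_dist :: "'n::finite heis \<Rightarrow> 'n heis \<Rightarrow> real" where
  "koranyi_dist p q = koranyi_norm (hmult (hinv p) q)"

definition horizontal_subspace :: "'n::finite hvec set \<Rightarrow> bool" where
  "horizontal_subspace V \<longleftrightarrow> subspace V \<and> (\<forall>x\<in>V. \<forall>y\<in>V. omega x y = 0)"

definition hsub :: "'n::finite hvec set \<Rightarrow> 'n heis set" where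
  "hsub V = V \<times> {0}"

definition hsub_perp :: "'n::finite hvec set \<Rightarrow> 'n heis set" where
  "hsub_perp V = {y. \<forall>x\<in>V. inner x y = 0} \<times> UNIV"

definition proj_perp :: "'n::finite hvec set \<Rightarrow> 'n heis \<Rightarrow> 'n heis" where
  "proj_perp V p = (THE q. q \<in> hsub_perp V \<and> (\<exists>r\<in>hsub V. p = hmult q r))"

definition locally_DS_regular ::
  "'a set \<Rightarrow> ('a \<Rightarrow> 'a \<Rightarrow> real) \<Rightarrow> 'b set \<Rightarrow> ('b \<Rightarrow> 'b \<Rightarrow> real) \<Rightarrow> ('a \<Rightarrow> 'b) \<Rightarrow> real \<Rightarrow> bool"
  where
  "locally_DS_regular X dX W dW \<pi> s \<longleftrightarrow>
     \<pi> ` X = W \<and>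
     (\<forall>K. K \<subseteq> X \<and> compactin (Metric_space.mtopology X dX) K \<longrightarrow>
        (\<exists>L. \<forall>p\<in>K. \<forall>q\<in>K. dW (\<pi> p) (\<pi> q) \<le> L * dX p q) \<and>
        (\<exists>C\<ge>1. \<exists>r0>0. \<forall>w\<in>W. \<forall>r. 0 < r \<and> r < r0 \<longrightarrow>
           (\<exists>F. finite F \<and> F \<subseteq> X \<and> real (card F) \<le> C * r powr (- s) \<and>
                {p\<in>K. \<pi> p \<in> Metric_space.mball W dW w r}
                  \<subseteq> (\<Union>c\<in>F. Metric_space.mball X dX c (C * r)))))"

definition s_foliation ::
  "'a set \<Rightarrow> ('a \<Rightarrow> 'a \<Rightarrow> real) \<Rightarrow> 'b set \<Rightarrow> ('b \<Rightarrow> 'b \<Rightarrow> real) \<Rightarrow> ('a \<Rightarrow> 'b) \<Rightarrow> real \<Rightarrow> bool"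
  where "s_foliation X dX W dW \<pi> s \<longleftrightarrow> locally_DS_regular X dX W dW \<pi> s"

end

theory Submission
  imports Defs
begin

text \<open>
  Writing \<open>p = (x, t)\<close> and \<open>P\<close> for the orthogonal projection onto \<open>V\<close>, the projection is
  \<open>(x - P x, t - 2 \<omega>(x, P x))\<close>. The Koranyi distance \<open>d\<close> of two points bounds the
  difference of their horizontal parts and, up to an error \<open>2 |x| d\<close>, of their vertical
  parts; together with \<open>|\<omega>(x, P x) - \<omega>(y, P y)| \<le> (|x| + |y|) |x - y|\<close> this makes the
  projection Lipschitz on bounded sets.

  If the projection of \<open>p\<close> lies in the Euclidean \<open>r\<close>-ball about \<open>w\<close>, then \<open>p\<close> is within
  \<open>O(r)\<close> of \<open>w * (P x, 0)\<close> in the horizontal direction. Replacing \<open>P x\<close> by a point \<open>g\<close> of an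
  \<open>r\<close>-grid in the bounded part of \<open>V\<close> (about \<open>r^(-k)\<close> points) leaves a vertical
  discrepancy which, because \<open>\<omega>\<close> vanishes on \<open>V\<close>, is only \<open>O(r)\<close>; a vertical grid of step
  \<open>r\<^sup>2\<close> (about \<open>1/r\<close> points) absorbs it. The \<open>O(r^(-k-1))\<close> points
  \<open>w * (g, 0) * (0, j r\<^sup>2)\<close> are then centres of Koranyi balls of radius \<open>(k + 2) r\<close>
  covering the preimage.
\<close>

section \<open>The symplectic form\<close>

lemma omega_eq_inner: "omega x y = inner (snd x, - fst x) y"
  by (simp add: omega_def inner_prod_def inner_vec_def sum_subtractf sum_negf)

lemma omega_add_left: "omega (a + b) c = omega a c + omega b c"
  by (simp add: omega_eq_inner inner_prod_def inner_add_left algebra_simps)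

lemma omega_add_right: "omega a (b + c) = omega a b + omega a c"
  by (simp add: omega_eq_inner inner_add_right)

lemma omega_diff_left: "omega (a - b) c = omega a c - omega b c"
  by (simp add: omega_eq_inner inner_prod_def inner_diff_left algebra_simps)

lemma omega_diff_right: "omega a (b - c) = omega a b - omega a c"
  by (simp add: omega_eq_inner inner_diff_right)

lemma omega_minus_left: "omega (- a) c = - omega a c"
  by (simp add: omega_eq_inner inner_prod_def)

lemma omega_commute: "omega a b = - omega b a"
  by (simp add: omega_def sum_negf[symmetric] algebra_simps)

lemma omega_zero_right [simp]: "omega a 0 = 0"
  by (simp add: omega_eq_inner)

lemma omega_self [simp]: "omega a a = 0"
  using omega_commute[of a a] by simp

lemma norm_rotate_Pair: "norm (snd x, - fst x) = norm x"
  by (cases x) (simp add: norm_Pair add.commute)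

lemma abs_omega_le: "\<bar>omega x y\<bar> \<le> norm x * norm y"
  using Cauchy_Schwarz_ineq2[of "(snd x, - fst x)" y]
  by (simp add: omega_eq_inner norm_rotate_Pair)

lemma inner_sq_add_inner_sq_le:
  fixes u v y :: "'a::real_inner"
  assumes "inner u v = 0" "norm u = norm v"
  shows "(inner u y)\<^sup>2 + (inner v y)\<^sup>2 \<le> (norm u)\<^sup>2 * (norm y)\<^sup>2"
proof (cases "u = 0")
  case True
  with assms(2) show ?thesis by simp
next
  case False
  define c where "c = (norm u)\<^sup>2"
  have c: "inner u u = c" "inner v v = c" "inner v u = 0"
    using assms by (simp_all add: c_def power2_norm_eq_inner[symmetric] inner_commute)
  have "0 \<le> inner (c *\<^sub>R y - inner u y *\<^sub>R u - inner v y *\<^sub>R v) (c *\<^sub>R y - inner u y *\<^sub>R u - inner v y *\<^sub>R v)"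
    by simp
  also have "\<dots> = c * (c * inner y y - ((inner u y)\<^sup>2 + (inner v y)\<^sup>2))"
    by (simp add: inner_diff_left inner_diff_right c assms(1) inner_commute[of y u]
        inner_commute[of y v] power2_eq_square algebra_simps)
  finally have "0 \<le> c * inner y y - ((inner u y)\<^sup>2 + (inner v y)\<^sup>2)"
    using False by (simp add: c_def zero_le_mult_iff)
  then show ?thesis
    by (simp add: c_def power2_norm_eq_inner)
qed

lemma inner_sq_add_omega_sq_le: "(inner x y)\<^sup>2 + (omega x y)\<^sup>2 \<le> (norm x)\<^sup>2 * (norm y)\<^sup>2"
  using inner_sq_add_inner_sq_le[of x "(snd x, - fst x)" y]
  by (simp add: omega_eq_inner inner_prod_def inner_commute norm_rotate_Pair)

section \<open>The group law and the Koranyi distance\<close>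

lemma hmult_hinv_Pair: "hmult (hinv (x, t)) (y, s) = (y - x, s - t - 2 * omega x y)"
  by (simp add: hmult_def hinv_def omega_minus_left)

lemma hmult_hinv_hmult_hinv: "hmult (hmult (hinv p) q) (hmult (hinv q) r) = hmult (hinv p) r"
  by (simp add: hmult_def hinv_def omega_add_left omega_add_right omega_minus_left
      omega_diff_left omega_diff_right omega_commute[of "fst q" "fst p"]
      algebra_simps)

lemma hinv_hmult_hinv: "hinv (hmult (hinv p) q) = hmult (hinv q) p"
  by (simp add: hmult_def hinv_def omega_minus_left omega_commute[of "fst q" "fst p"])

lemma koranyi_norm_nonneg: "0 \<le> koranyi_norm p"
  by (simp add: koranyi_norm_def)

lemma koranyi_norm_pow4: "koranyi_norm p ^ 4 = norm (fst p) ^ 4 + (snd p)\<^sup>2"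
  unfolding koranyi_norm_def by (rule real_root_pow_pos2) auto

lemma koranyi_norm_sq: "(koranyi_norm p)\<^sup>2 = sqrt (((norm (fst p))\<^sup>2)\<^sup>2 + (snd p)\<^sup>2)"
proof -
  have "((koranyi_norm p)\<^sup>2)\<^sup>2 = ((norm (fst p))\<^sup>2)\<^sup>2 + (snd p)\<^sup>2"
    using koranyi_norm_pow4[of p] by (simp add: power_mult[symmetric])
  then show ?thesis by (metis real_sqrt_abs abs_of_nonneg zero_le_power2)
qed

lemma norm_fst_le_koranyi_norm: "norm (fst p) \<le> koranyi_norm p"
  using koranyi_norm_pow4[of p] koranyi_norm_nonneg[of p]
    power_mono_iff[of "norm (fst p)" "koranyi_norm p" 4]
  by simp

lemma abs_snd_le_koranyi_norm_sq: "\<bar>snd p\<bar> \<le> (koranyi_norm p)\<^sup>2"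
proof -
  have "(snd p)\<^sup>2 \<le> ((koranyi_norm p)\<^sup>2)\<^sup>2"
    using koranyi_norm_pow4[of p] by (simp add: power_mult[symmetric])
  then show ?thesis by (metis abs_le_square_iff abs_of_nonneg zero_le_power2)
qed

lemma koranyi_norm_le: "koranyi_norm (x, t) \<le> norm x + sqrt \<bar>t\<bar>"
proof -
  define a b where "a = norm x" and "b = sqrt \<bar>t\<bar>"
  have ab: "0 \<le> a" "0 \<le> b" by (simp_all add: a_def b_def)
  have "b ^ 4 = (b\<^sup>2)\<^sup>2" by simp
  also have "\<dots> = t\<^sup>2" by (simp add: b_def)
  finally have "b ^ 4 = t\<^sup>2" .
  then have "koranyi_norm (x, t) ^ 4 = a ^ 4 + b ^ 4"
    by (simp add: koranyi_norm_pow4 a_def)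
  also have "\<dots> \<le> a ^ 4 + b ^ 4 + a * b * (4 * a\<^sup>2 + 6 * a * b + 4 * b\<^sup>2)"
    using ab by simp
  also have "\<dots> = (a + b) ^ 4"
    by (simp add: power4_eq_xxxx power2_eq_square algebra_simps)
  finally have "koranyi_norm (x, t) ^ 4 \<le> (a + b) ^ 4" .
  moreover have "0 \<le> a + b" using ab by simp
  ultimately have "koranyi_norm (x, t) \<le> a + b"
    using power_mono_iff[of "koranyi_norm (x, t)" "a + b" 4] koranyi_norm_nonneg[of "(x, t)"] by simp
  then show ?thesis by (simp add: a_def b_def)
qed

lemma koranyi_norm_eq_0_iff: "koranyi_norm p = 0 \<longleftrightarrow> p = 0"
proof
  assume "koranyi_norm p = 0"
  then show "p = 0"
    using norm_fst_le_koranyi_norm[of p] abs_snd_le_koranyi_norm_sq[of p]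
    by (simp add: prod_eq_iff)
qed (simp add: koranyi_norm_def)

lemma koranyi_norm_hinv: "koranyi_norm (hinv p) = koranyi_norm p"
  by (simp add: koranyi_norm_def hinv_def)

text \<open>Cygan's proof: besides two triangle inequalities in the plane, it only needs that the
  vector \<open>(\<langle>x, y\<rangle>, \<omega>(x, y))\<close> has length at most \<open>|x| |y|\<close>.\<close>

lemma koranyi_norm_hmult_le: "koranyi_norm (hmult a b) \<le> koranyi_norm a + koranyi_norm b"
proof -
  obtain x t y s where ab: "a = (x, t)" "b = (y, s)" by (cases a, cases b) auto
  have "(norm (x + y))\<^sup>2 = (norm x)\<^sup>2 + ((norm y)\<^sup>2 + 2 * inner x y)"
    by (simp add: power2_norm_eq_inner inner_add_left inner_add_right inner_commute[of y x])
  then have "(koranyi_norm (hmult a b))\<^sup>2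
      = sqrt (((norm x)\<^sup>2 + ((norm y)\<^sup>2 + 2 * inner x y))\<^sup>2 + (t + (s + 2 * omega x y))\<^sup>2)"
    by (simp add: koranyi_norm_sq hmult_def ab add.assoc)
  also have "\<dots> \<le> sqrt (((norm x)\<^sup>2)\<^sup>2 + t\<^sup>2)
      + sqrt (((norm y)\<^sup>2 + 2 * inner x y)\<^sup>2 + (s + 2 * omega x y)\<^sup>2)"
    by (rule real_sqrt_sum_squares_triangle_ineq)
  also have "\<dots> \<le> sqrt (((norm x)\<^sup>2)\<^sup>2 + t\<^sup>2) + sqrt (((norm y)\<^sup>2)\<^sup>2 + s\<^sup>2)
      + sqrt ((2 * inner x y)\<^sup>2 + (2 * omega x y)\<^sup>2)"
    using real_sqrt_sum_squares_triangle_ineq[of "(norm y)\<^sup>2" "2 * inner x y" s "2 * omega x y"]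
    by simp
  also have "sqrt ((2 * inner x y)\<^sup>2 + (2 * omega x y)\<^sup>2) = 2 * sqrt ((inner x y)\<^sup>2 + (omega x y)\<^sup>2)"
  proof -
    have "(2 * inner x y)\<^sup>2 + (2 * omega x y)\<^sup>2 = 2\<^sup>2 * ((inner x y)\<^sup>2 + (omega x y)\<^sup>2)"
      by (simp add: power_mult_distrib)
    then show ?thesis by (simp only: real_sqrt_mult real_sqrt_abs)
  qed
  also have "sqrt ((inner x y)\<^sup>2 + (omega x y)\<^sup>2) \<le> norm x * norm y"
    using inner_sq_add_omega_sq_le[of x y] by (simp add: real_le_lsqrt power_mult_distrib)
  also have "norm x * norm y \<le> koranyi_norm a * koranyi_norm b"
    using norm_fst_le_koranyi_norm[of a] norm_fst_le_koranyi_norm[of b]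
    by (simp add: ab mult_mono koranyi_norm_nonneg)
  finally have "(koranyi_norm (hmult a b))\<^sup>2 \<le> (koranyi_norm a + koranyi_norm b)\<^sup>2"
    by (simp add: koranyi_norm_sq ab power2_sum)
  then show ?thesis
    by (rule power2_le_imp_le) (simp add: koranyi_norm_nonneg add_nonneg_nonneg)
qed

interpretation Koranyi: Metric_space UNIV koranyi_dist
proof
  fix x y z :: "'n::finite heis"
  show "0 \<le> koranyi_dist x y"
    by (simp add: koranyi_dist_def koranyi_norm_nonneg)
  show "koranyi_dist x y = koranyi_dist y x"
    by (metis koranyi_dist_def koranyi_norm_hinv hinv_hmult_hinv)
  show "koranyi_dist x y = 0 \<longleftrightarrow> x = y"
    by (cases x, cases y) (auto simp: koranyi_dist_def hmult_hinv_Pair koranyi_norm_eq_0_iff zero_prod_def)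
  show "koranyi_dist x z \<le> koranyi_dist x y + koranyi_dist y z"
    by (metis koranyi_dist_def koranyi_norm_hmult_le hmult_hinv_hmult_hinv)
qed

lemma koranyi_dist_Pair: "koranyi_dist (x, t) (y, s) = koranyi_norm (y - x, s - t - 2 * omega x y)"
  by (simp add: koranyi_dist_def hmult_hinv_Pair)

lemma norm_diff_le_koranyi_dist: "norm (y - x) \<le> koranyi_dist (x, t) (y, s)"
  using norm_fst_le_koranyi_norm[of "(y - x, s - t - 2 * omega x y)"] by (simp add: koranyi_dist_Pair)

lemma abs_diff_snd_le_koranyi_dist:
  "\<bar>s - t\<bar> \<le> (koranyi_dist (x, t) (y, s))\<^sup>2 + 2 * norm x * koranyi_dist (x, t) (y, s)"
proof -
  have "\<bar>omega x y\<bar> = \<bar>omega x (y - x)\<bar>"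
    by (simp add: omega_diff_right)
  also have "\<dots> \<le> norm x * norm (y - x)"
    by (rule abs_omega_le)
  also have "\<dots> \<le> norm x * koranyi_dist (x, t) (y, s)"
    by (simp add: mult_left_mono norm_diff_le_koranyi_dist)
  finally have "\<bar>omega x y\<bar> \<le> norm x * koranyi_dist (x, t) (y, s)" .
  moreover have "\<bar>s - t - 2 * omega x y\<bar> \<le> (koranyi_dist (x, t) (y, s))\<^sup>2"
    using abs_snd_le_koranyi_norm_sq[of "(y - x, s - t - 2 * omega x y)"]
    by (simp add: koranyi_dist_Pair)
  ultimately show ?thesis by linarith
qed

lemma dist_le_koranyi_dist:
  "dist (x, t) (y, s) \<le> koranyi_dist (x, t) (y, s) + (koranyi_dist (x, t) (y, s))\<^sup>2
     + 2 * norm x * koranyi_dist (x, t) (y, s)"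
proof -
  have "dist (x, t) (y, s) \<le> norm (y - x) + \<bar>s - t\<bar>"
    using norm_Pair_le[of "x - y" "t - s"] by (simp add: dist_norm norm_minus_commute abs_minus_commute)
  then show ?thesis
    using norm_diff_le_koranyi_dist[of y x t s] abs_diff_snd_le_koranyi_dist[of s t x y] by linarith
qed

lemma koranyi_dist_le_koranyi_norm_add: "koranyi_dist p q \<le> koranyi_norm p + koranyi_norm q"
  using koranyi_norm_hmult_le[of "hinv p" q] by (simp add: koranyi_dist_def koranyi_norm_hinv)

lemma koranyi_norm_le_of_norm_le:
  assumes "norm p \<le> R" "1 \<le> R"
  shows "koranyi_norm p \<le> 2 * R"
proof -
  obtain x t where p: "p = (x, t)" by (cases p) auto
  have "norm x \<le> R" "\<bar>t\<bar> \<le> R"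
    using assms(1) norm_fst_le[of x t] norm_snd_le[of t x] by (simp_all add: p)
  moreover have "sqrt \<bar>t\<bar> \<le> R"
  proof -
    have "R * 1 \<le> R * R" using assms(2) by (intro mult_left_mono) auto
    then have "\<bar>t\<bar> \<le> R\<^sup>2" using \<open>\<bar>t\<bar> \<le> R\<close> by (simp add: power2_eq_square)
    then have "sqrt \<bar>t\<bar> \<le> sqrt (R\<^sup>2)" by (rule real_sqrt_le_mono)
    then show ?thesis using assms(2) by simp
  qed
  ultimately show ?thesis
    using koranyi_norm_le[of x t] unfolding p by linarith
qed

lemma continuous_map_koranyi_id: "continuous_map Koranyi.mtopology euclidean id"
  unfolding mtopology_is_euclidean[symmetric]
proof (rule Koranyi.metric_continuous_map[OF Met_TC.Metric_space_axioms, THEN iffD2],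
    intro conjI ballI allI impI)
  fix p :: "'n::finite heis" and \<epsilon> :: real
  assume "0 < \<epsilon>"
  obtain x t where p: "p = (x, t)" by (cases p) auto
  define \<delta> where "\<delta> = min 1 (\<epsilon> / (2 + 2 * norm x))"
  have pos: "0 < 2 + 2 * norm x" by (simp add: add_pos_nonneg)
  have close: "dist p q < \<epsilon>" if "koranyi_dist p q < \<delta>" for q
  proof -
    obtain y s where q: "q = (y, s)" by (cases q) auto
    define d where "d = koranyi_dist p q"
    have d: "0 \<le> d" "d < \<delta>" "d \<le> 1"
      using that by (simp_all add: d_def \<delta>_def)
    then have "d\<^sup>2 \<le> d" by (simp add: power2_eq_square mult_left_le)
    then have "dist p q \<le> d * (2 + 2 * norm x)"
      using dist_le_koranyi_dist[of x t y s] by (simp add: p q d_def algebra_simps)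
    also have "\<dots> < \<delta> * (2 + 2 * norm x)"
      using d pos by (simp add: mult_strict_right_mono)
    also have "\<dots> \<le> \<epsilon>"
    proof -
      have "\<delta> \<le> \<epsilon> / (2 + 2 * norm x)" by (simp add: \<delta>_def)
      then show ?thesis using pos by (simp add: pos_le_divide_eq)
    qed
    finally show ?thesis .
  qed
  show "\<exists>\<delta>>0. \<forall>q. q \<in> UNIV \<and> koranyi_dist p q < \<delta> \<longrightarrow> dist (id p) (id q) < \<epsilon>"
  proof (intro exI[of _ \<delta>] conjI allI impI)
    show "0 < \<delta>"
      using \<open>0 < \<epsilon>\<close> pos by (simp add: \<delta>_def)
  qed (simp add: close)
qed simp

lemma compactin_koranyi_imp_compact:
  "compactin Koranyi.mtopology (K :: 'n::finite heis set) \<Longrightarrow> compact K"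
  using image_compactin[OF _ continuous_map_koranyi_id] by simp

section \<open>Orthogonal projection onto a subspace\<close>

definition orth_proj :: "'a::euclidean_space set \<Rightarrow> 'a \<Rightarrow> 'a" where
  "orth_proj V x = (SOME y. y \<in> V \<and> (\<forall>w\<in>V. inner (x - y) w = 0))"

lemma
  assumes "subspace V"
  shows orth_proj_in: "orth_proj V x \<in> V"
    and orth_proj_orthogonal: "w \<in> V \<Longrightarrow> inner (x - orth_proj V x) w = 0"
proof -
  have "span V = V" using assms by (simp add: span_eq_iff)
  obtain y z where "y \<in> span V" "\<And>w. w \<in> span V \<Longrightarrow> orthogonal z w" "x = y + z"
    using orthogonal_subspace_decomp_exists[of V x] by blast
  then have "\<exists>y. y \<in> V \<and> (\<forall>w\<in>V. inner (x - y) w = 0)"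
    using \<open>span V = V\<close> by (intro exI[of _ y]) (auto simp: orthogonal_def)
  then have "orth_proj V x \<in> V \<and> (\<forall>w\<in>V. inner (x - orth_proj V x) w = 0)"
    unfolding orth_proj_def by (rule someI_ex)
  then show "orth_proj V x \<in> V" "w \<in> V \<Longrightarrow> inner (x - orth_proj V x) w = 0"
    by auto
qed

lemma orth_proj_unique:
  assumes "subspace V" "y \<in> V" "\<And>w. w \<in> V \<Longrightarrow> inner (x - y) w = 0"
  shows "orth_proj V x = y"
proof -
  let ?p = "orth_proj V x"
  have "?p - y \<in> V"
    using assms(1,2) orth_proj_in[OF assms(1)] by (simp add: subspace_diff)
  then have "inner (?p - y) (?p - y) = inner (x - y) (?p - y) - inner (x - ?p) (?p - y)"
    by (simp add: inner_diff_left)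
  also have "\<dots> = 0"
    using \<open>?p - y \<in> V\<close> assms(3) orth_proj_orthogonal[OF assms(1)] by simp
  finally show ?thesis by simp
qed

lemma orth_proj_diff:
  assumes "subspace V"
  shows "orth_proj V (a - b) = orth_proj V a - orth_proj V b"
proof (rule orth_proj_unique[OF assms])
  show "orth_proj V a - orth_proj V b \<in> V"
    using assms by (simp add: orth_proj_in subspace_diff)
  fix w assume "w \<in> V"
  have "inner (a - b - (orth_proj V a - orth_proj V b)) w
      = inner (a - orth_proj V a) w - inner (b - orth_proj V b) w"
    by (simp add: inner_diff_left algebra_simps)
  then show "inner (a - b - (orth_proj V a - orth_proj V b)) w = 0"
    using orth_proj_orthogonal[OF assms \<open>w \<in> V\<close>] by simp
qed

lemma orth_proj_eq_0:
  assumes "subspace V" "\<And>w. w \<in> V \<Longrightarrow> inner x w = 0"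
  shows "orth_proj V x = 0"
  using assms by (intro orth_proj_unique) (auto simp: subspace_0)

lemma
  assumes "subspace V"
  shows norm_orth_proj_le: "norm (orth_proj V x) \<le> norm x"
    and norm_diff_orth_proj_le: "norm (x - orth_proj V x) \<le> norm x"
proof -
  have "(norm x)\<^sup>2 = (norm (x - orth_proj V x))\<^sup>2 + (norm (orth_proj V x))\<^sup>2"
    using norm_add_Pythagorean[of "x - orth_proj V x" "orth_proj V x"] assms
    by (simp add: orthogonal_def orth_proj_orthogonal orth_proj_in)
  then have "(norm (orth_proj V x))\<^sup>2 \<le> (norm x)\<^sup>2" "(norm (x - orth_proj V x))\<^sup>2 \<le> (norm x)\<^sup>2"
    by simp_all
  then show "norm (orth_proj V x) \<le> norm x" "norm (x - orth_proj V x) \<le> norm x"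
    by (auto intro: power2_le_imp_le)
qed

section \<open>The projection onto \<open>V\<^sup>\<perp>\<close>\<close>

lemma proj_perp_Pair:
  assumes "horizontal_subspace V"
  shows "proj_perp V (x, t) = (x - orth_proj V x, t - 2 * omega x (orth_proj V x))"
  unfolding proj_perp_def
proof (rule the_equality)
  have V: "subspace V" using assms by (simp add: horizontal_subspace_def)
  let ?P = "orth_proj V x"
  show "(x - ?P, t - 2 * omega x ?P) \<in> hsub_perp V
      \<and> (\<exists>r\<in>hsub V. (x, t) = hmult (x - ?P, t - 2 * omega x ?P) r)"
  proof
    show "(x - ?P, t - 2 * omega x ?P) \<in> hsub_perp V"
      using orth_proj_orthogonal[OF V] by (auto simp: hsub_perp_def inner_commute)
    show "\<exists>r\<in>hsub V. (x, t) = hmult (x - ?P, t - 2 * omega x ?P) r"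
      using orth_proj_in[OF V]
      by (intro bexI[of _ "(?P, 0)"]) (auto simp: hsub_def hmult_def omega_diff_left)
  qed
  fix q assume "q \<in> hsub_perp V \<and> (\<exists>r\<in>hsub V. (x, t) = hmult q r)"
  then obtain y s v where q: "q = (y, s)" "\<forall>w\<in>V. inner w y = 0" "v \<in> V"
      and xt: "x = y + v" "t = s + 2 * omega y v"
    by (auto simp: hsub_perp_def hsub_def hmult_def)
  have "?P = v"
    using q(2,3) xt(1) by (intro orth_proj_unique[OF V]) (auto simp: inner_commute)
  then show "q = (x - ?P, t - 2 * omega x ?P)"
    using q(1) xt by (simp add: omega_add_left)
qed

lemma proj_perp_image:
  assumes "horizontal_subspace V"
  shows "proj_perp V ` UNIV = hsub_perp V"
proof -
  have V: "subspace V" using assms by (simp add: horizontal_subspace_def)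
  have "proj_perp V p \<in> hsub_perp V" for p
    using orth_proj_orthogonal[OF V, of _ "fst p"]
    by (cases p) (auto simp: proj_perp_Pair[OF assms] hsub_perp_def inner_commute)
  moreover have "w \<in> range (proj_perp V)" if "w \<in> hsub_perp V" for w
  proof -
    obtain y s where w: "w = (y, s)" by (cases w) auto
    have "orth_proj V y = 0"
      using that by (intro orth_proj_eq_0[OF V]) (auto simp: w hsub_perp_def inner_commute)
    then have "proj_perp V w = w"
      by (simp add: w proj_perp_Pair[OF assms])
    then show ?thesis by (metis rangeI)
  qed
  ultimately show ?thesis by blast
qed

lemma abs_omega_orth_proj_diff_le:
  assumes "subspace V"
  shows "\<bar>omega x (orth_proj V x) - omega y (orth_proj V y)\<bar> \<le> (norm x + norm y) * norm (x - y)"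
proof -
  have "omega x (orth_proj V x) - omega y (orth_proj V y)
      = omega (x - y) (orth_proj V x) + omega y (orth_proj V (x - y))"
    by (simp add: orth_proj_diff[OF assms] omega_diff_left omega_diff_right)
  also have "\<bar>\<dots>\<bar> \<le> norm (x - y) * norm (orth_proj V x) + norm y * norm (orth_proj V (x - y))"
    using abs_omega_le[of "x - y" "orth_proj V x"] abs_omega_le[of y "orth_proj V (x - y)"]
    by linarith
  also have "\<dots> \<le> norm (x - y) * norm x + norm y * norm (x - y)"
    using norm_orth_proj_le[OF assms] by (intro add_mono mult_left_mono) auto
  finally show ?thesis by (simp add: algebra_simps)
qed

lemma dist_proj_perp_le:
  assumes "horizontal_subspace V"
  shows "dist (proj_perp V (x, t)) (proj_perp V (y, s))
    \<le> norm (x - y) + \<bar>t - s\<bar> + 2 * (norm x + norm y) * norm (x - y)"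
proof -
  have V: "subspace V" using assms by (simp add: horizontal_subspace_def)
  let ?\<Delta> = "omega x (orth_proj V x) - omega y (orth_proj V y)"
  have "dist (proj_perp V (x, t)) (proj_perp V (y, s))
      = norm ((x - y) - orth_proj V (x - y), (t - s) - 2 * ?\<Delta>)"
    by (simp add: proj_perp_Pair[OF assms] dist_norm orth_proj_diff[OF V] algebra_simps)
  also have "\<dots> \<le> norm ((x - y) - orth_proj V (x - y)) + \<bar>(t - s) - 2 * ?\<Delta>\<bar>"
    by (metis norm_Pair_le real_norm_def)
  also have "\<dots> \<le> norm (x - y) + (\<bar>t - s\<bar> + 2 * \<bar>?\<Delta>\<bar>)"
  proof (rule add_mono)
    show "norm ((x - y) - orth_proj V (x - y)) \<le> norm (x - y)"
      by (rule norm_diff_orth_proj_le[OF V])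
    show "\<bar>(t - s) - 2 * ?\<Delta>\<bar> \<le> \<bar>t - s\<bar> + 2 * \<bar>?\<Delta>\<bar>"
      using abs_triangle_ineq4[of "t - s" "2 * ?\<Delta>"] by (simp only: abs_mult abs_numeral)
  qed
  moreover have "2 * \<bar>?\<Delta>\<bar> \<le> 2 * ((norm x + norm y) * norm (x - y))"
    using abs_omega_orth_proj_diff_le[OF V, of x y] by simp
  ultimately show ?thesis by (simp only: mult.assoc)
qed

lemma dist_proj_perp_le_koranyi_dist:
  assumes "horizontal_subspace V" "norm p \<le> R" "norm q \<le> R" "1 \<le> R"
  shows "dist (proj_perp V p) (proj_perp V q) \<le> (1 + 10 * R) * koranyi_dist p q"
proof -
  obtain x t y s where pq: "p = (x, t)" "q = (y, s)" by (cases p, cases q) auto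
  define d where "d = koranyi_dist p q"
  have x: "norm x \<le> R" and y: "norm y \<le> R"
    using assms(2,3) norm_fst_le[of x t] norm_fst_le[of y s] by (simp_all add: pq)
  have "d \<le> koranyi_norm p + koranyi_norm q"
    unfolding d_def by (rule koranyi_dist_le_koranyi_norm_add)
  then have "d \<le> 4 * R"
    using koranyi_norm_le_of_norm_le[OF assms(2,4)] koranyi_norm_le_of_norm_le[OF assms(3,4)]
    by linarith
  then have "d\<^sup>2 \<le> 4 * R * d"
    by (simp add: power2_eq_square d_def mult_right_mono)
  then have ts: "\<bar>t - s\<bar> \<le> 6 * R * d"
    using abs_diff_snd_le_koranyi_dist[of s t x y] mult_right_mono[OF x, of d]
    by (simp add: abs_minus_commute pq d_def)
  have xy: "norm (x - y) \<le> d"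
    using norm_diff_le_koranyi_dist[of y x t s] by (simp add: norm_minus_commute pq d_def)
  have "2 * (norm x + norm y) * norm (x - y) \<le> 2 * (2 * R) * d"
    using x y xy assms(4) by (intro mult_mono) auto
  then show ?thesis
    using dist_proj_perp_le[OF assms(1), of x t y s] ts xy by (simp add: pq d_def algebra_simps)
qed

section \<open>Grids\<close>

lemma abs_round_divide_mult_le:
  assumes "0 < h"
  shows "\<bar>h * of_int (round (u / h)) - u\<bar> \<le> h / 2"
proof -
  have "h * of_int (round (u / h)) - u = h * (of_int (round (u / h)) - u / h)"
    using assms by (simp add: right_diff_distrib)
  then have "\<bar>h * of_int (round (u / h)) - u\<bar> = h * \<bar>of_int (round (u / h)) - u / h\<bar>"
    using assms by (simp add: abs_mult)
  also have "\<dots> \<le> h * (1 / 2)"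
    using assms of_int_round_abs_le[of "u / h"] by (intro mult_left_mono) auto
  finally show ?thesis by simp
qed

lemma round_divide_bounded:
  fixes h M :: real
  assumes "0 < h" "0 \<le> M"
  obtains N :: int where "real (card {-N..N}) \<le> 2 * M / h + 5"
    "\<And>u. \<bar>u\<bar> \<le> M \<Longrightarrow> round (u / h) \<in> {-N..N}"
proof
  define N where "N = \<lceil>M / h\<rceil> + 1"
  have "0 \<le> M / h" using assms by simp
  then have "0 \<le> N" by (simp add: N_def)
  then have "real (card {-N..N}) = 2 * of_int N + 1"
    by simp
  also have "\<dots> \<le> 2 * M / h + 5"
    using ceiling_correct[of "M / h"] by (simp add: N_def)
  finally show "real (card {-N..N}) \<le> 2 * M / h + 5" .
  fix u :: real assume "\<bar>u\<bar> \<le> M"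
  then have "\<bar>u\<bar> / h \<le> M / h"
    using assms(1) by (rule divide_right_mono[OF _ less_imp_le])
  then have "\<bar>u / h\<bar> \<le> M / h"
    using assms(1) by simp
  then have "\<bar>real_of_int (round (u / h))\<bar> \<le> real_of_int N"
    using of_int_round_abs_le[of "u / h"] le_of_int_ceiling[of "M / h"]
    unfolding N_def by linarith
  then show "round (u / h) \<in> {-N..N}" by (simp add: abs_le_iff)
qed

lemma orthonormal_span_expansion:
  fixes v :: "'a::euclidean_space"
  assumes "finite B" "pairwise orthogonal B" "\<And>b. b \<in> B \<Longrightarrow> norm b = 1" "v \<in> span B"
  shows "v = (\<Sum>b\<in>B. inner v b *\<^sub>R b)"
proof -
  obtain u where u: "v = (\<Sum>b\<in>B. u b *\<^sub>R b)"
    using assms(4) span_finite[OF assms(1)] by auto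
  have "inner v c = u c" if "c \<in> B" for c
  proof -
    have "inner v c = (\<Sum>b\<in>B. u b * inner b c)"
      by (simp add: u inner_sum_left)
    also have "\<dots> = (\<Sum>b\<in>B. if b = c then u b else 0)"
      using assms(2,3) that
      by (intro sum.cong) (auto simp: pairwise_def orthogonal_def norm_eq_1)
    also have "\<dots> = u c"
      using assms(1) that by simp
    finally show ?thesis .
  qed
  then show ?thesis by (simp add: u)
qed

definition grid_points :: "'a::real_vector set \<Rightarrow> real \<Rightarrow> int \<Rightarrow> 'a set" where
  "grid_points B r N = (\<lambda>m. \<Sum>b\<in>B. (r * of_int (m b)) *\<^sub>R b) ` (B \<rightarrow>\<^sub>E {-N..N})"

lemma
  assumes "finite B"
  shows finite_grid_points: "finite (grid_points B r N)"
    and card_grid_points_le: "card (grid_points B r N) \<le> card {-N..N} ^ card B"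
proof -
  show "finite (grid_points B r N)"
    unfolding grid_points_def using assms by (intro finite_imageI finite_PiE) auto
  have "card (grid_points B r N) \<le> card (B \<rightarrow>\<^sub>E {-N..N})"
    unfolding grid_points_def using assms by (intro card_image_le finite_PiE) auto
  then show "card (grid_points B r N) \<le> card {-N..N} ^ card B"
    using assms by (simp add: card_PiE)
qed

lemma grid_points_subset_span: "grid_points B r N \<subseteq> span B"
  by (auto simp: grid_points_def intro: span_sum span_scale span_base)

lemma grid_point_near:
  fixes v :: "'a::euclidean_space"
  assumes "finite B" "pairwise orthogonal B" "\<And>b. b \<in> B \<Longrightarrow> norm b = 1" "v \<in> span B"
    and "0 < r" "\<And>b. b \<in> B \<Longrightarrow> round (inner v b / r) \<in> {-N..N}"
  shows "\<exists>g\<in>grid_points B r N. norm (v - g) \<le> real (card B) * r"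
proof -
  define m where "m = (\<lambda>b\<in>B. round (inner v b / r))"
  have m: "m \<in> B \<rightarrow>\<^sub>E {-N..N}"
    using assms(6) by (auto simp: m_def)
  have "v - (\<Sum>b\<in>B. (r * of_int (m b)) *\<^sub>R b) = (\<Sum>b\<in>B. (inner v b - r * of_int (m b)) *\<^sub>R b)"
    using orthonormal_span_expansion[OF assms(1-4)] by (simp add: sum_subtractf scaleR_diff_left)
  then have "norm (v - (\<Sum>b\<in>B. (r * of_int (m b)) *\<^sub>R b))
      \<le> (\<Sum>b\<in>B. norm ((inner v b - r * of_int (m b)) *\<^sub>R b))"
    by (metis norm_sum)
  also have "\<dots> \<le> (\<Sum>b\<in>B. r)"
  proof (rule sum_mono)
    fix b assume "b \<in> B"
    then have "\<bar>inner v b - r * of_int (m b)\<bar> \<le> r / 2"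
      using abs_round_divide_mult_le[OF assms(5), of "inner v b"]
      by (simp add: m_def abs_minus_commute)
    then show "norm ((inner v b - r * of_int (m b)) *\<^sub>R b) \<le> r"
      using assms(3)[OF \<open>b \<in> B\<close>] assms(5) by simp
  qed
  finally show ?thesis
    using m unfolding grid_points_def by auto
qed

lemma subspace_grid_cover:
  fixes V :: "'a::euclidean_space set"
  assumes "subspace V" "0 < r" "0 \<le> R"
  obtains G where "finite G" "G \<subseteq> V" "real (card G) \<le> (2 * R / r + 5) ^ dim V"
    "\<And>v. v \<in> V \<Longrightarrow> norm v \<le> R \<Longrightarrow> \<exists>g\<in>G. norm (v - g) \<le> real (dim V) * r"
proof -
  obtain B where B: "B \<subseteq> V" "pairwise orthogonal B" "\<And>b. b \<in> B \<Longrightarrow> norm b = 1"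
    "independent B" "card B = dim V" "span B = V"
    using orthonormal_basis_subspace[OF assms(1)] by metis
  have "finite B" using B(4) by (rule independent_imp_finite)
  obtain N :: int where N: "real (card {-N..N}) \<le> 2 * R / r + 5"
    "\<And>u. \<bar>u\<bar> \<le> R \<Longrightarrow> round (u / r) \<in> {-N..N}"
    using round_divide_bounded[OF assms(2,3)] by metis
  have "real (card (grid_points B r N)) \<le> real (card {-N..N}) ^ dim V"
    using card_grid_points_le[OF \<open>finite B\<close>, of r N] B(5) by (metis of_nat_le_iff of_nat_power)
  also have "\<dots> \<le> (2 * R / r + 5) ^ dim V"
    using N(1) by (intro power_mono) auto
  finally have "real (card (grid_points B r N)) \<le> (2 * R / r + 5) ^ dim V" .
  moreover have "\<exists>g\<in>grid_points B r N. norm (v - g) \<le> real (dim V) * r"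
    if "v \<in> V" "norm v \<le> R" for v
  proof -
    have "\<bar>inner v b\<bar> \<le> R" if "b \<in> B" for b
      using Cauchy_Schwarz_ineq2[of v b] B(3)[OF that] \<open>norm v \<le> R\<close> by simp
    then show ?thesis
      using grid_point_near[OF \<open>finite B\<close> B(2,3) _ assms(2)] N(2) B(5,6) that(1) by simp
  qed
  ultimately show ?thesis
    using that finite_grid_points[OF \<open>finite B\<close>] grid_points_subset_span[of B r N] B(6) by blast
qed

section \<open>Covering the preimages of small balls\<close>

text \<open>As \<open>\<omega>\<close> vanishes on \<open>V\<close>, the vertical coordinate below is, up to \<open>a\<close>, linear in the
  quantities \<open>x - P - w1\<close> and \<open>t - 2 \<omega>(x, P) - w2\<close>, which are small when \<open>(w1, w2)\<close> is
  close to the projection of \<open>(x, t)\<close> and \<open>P\<close> is its horizontal part in \<open>V\<close>.\<close>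

lemma hmult_hinv_cover_centre:
  assumes "omega P g = 0"
  shows "hmult (hinv (hmult (hmult (w1, w2) (g, 0)) (0, a))) (x, t)
    = (x - w1 - g, (t - 2 * omega x P - w2) + 2 * omega (x - P - w1) (P + w1 + g) - a)"
  using assms
  by (simp add: hmult_def hinv_def omega_add_left omega_add_right omega_diff_left
      omega_minus_left omega_commute[of g w1] omega_commute[of g x] omega_commute[of w1 x]
      omega_commute[of P w1] omega_commute[of P g] algebra_simps)

lemma koranyi_dist_cover_centre_lt:
  assumes "omega P g = 0" "norm (x - P - w1) < r" "norm (P - g) \<le> k * r"
    and "\<bar>a - ((t - 2 * omega x P - w2) + 2 * omega (x - P - w1) (P + w1 + g))\<bar> \<le> r\<^sup>2 / 2"
  shows "koranyi_dist (hmult (hmult (w1, w2) (g, 0)) (0, a)) (x, t) < (k + 2) * r"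
proof -
  let ?Q = "(t - 2 * omega x P - w2) + 2 * omega (x - P - w1) (P + w1 + g)"
  have "0 < r" using assms(2) by (meson norm_ge_zero order_le_less_trans)
  have "norm (x - w1 - g) \<le> norm (x - P - w1) + norm (P - g)"
    using norm_triangle_ineq[of "x - P - w1" "P - g"] by (simp add: algebra_simps)
  moreover have "sqrt \<bar>?Q - a\<bar> \<le> r"
  proof -
    have "\<bar>?Q - a\<bar> \<le> r\<^sup>2"
      using assms(4) abs_minus_commute[of "?Q" a] zero_le_power2[of r] by linarith
    then show ?thesis
      using \<open>0 < r\<close> real_sqrt_le_mono[of "\<bar>?Q - a\<bar>" "r\<^sup>2"] by simp
  qed
  ultimately have "koranyi_norm (x - w1 - g, ?Q - a) < (k + 2) * r"
    using koranyi_norm_le[of "x - w1 - g" "?Q - a"] assms(2,3) by (simp add: algebra_simps)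
  then show ?thesis
    by (simp add: koranyi_dist_def hmult_hinv_cover_centre[OF assms(1)])
qed

lemma dist_proj_perp_lt_components:
  assumes "horizontal_subspace V" "dist (w1, w2) (proj_perp V (x, t)) < r"
  shows "norm (x - orth_proj V x - w1) < r" "\<bar>t - 2 * omega x (orth_proj V x) - w2\<bar> < r"
proof -
  let ?q = "(x - orth_proj V x, t - 2 * omega x (orth_proj V x))"
  have "dist (w1, w2) ?q < r"
    using assms by (simp add: proj_perp_Pair)
  then have "dist w1 (x - orth_proj V x) < r" "dist w2 (t - 2 * omega x (orth_proj V x)) < r"
    using dist_fst_le[of "(w1, w2)" ?q] dist_snd_le[of "(w1, w2)" ?q] by simp_all
  then show "norm (x - orth_proj V x - w1) < r" "\<bar>t - 2 * omega x (orth_proj V x) - w2\<bar> < r"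
    by (simp_all add: dist_norm norm_minus_commute abs_minus_commute)
qed

lemma proj_perp_fibre_near_cover_centre:
  fixes V :: "'n::finite hvec set"
  assumes hV: "horizontal_subspace V" and "norm x \<le> R" "0 < r" "r \<le> 1"
    and close: "dist (w1, w2) (proj_perp V (x, t)) < r"
    and "g \<in> V" "norm (orth_proj V x - g) \<le> real (dim V) * r"
  obtains Q where "\<bar>Q\<bar> \<le> r * (6 * R + 2 * real (dim V) + 3)"
    "\<And>a. \<bar>a - Q\<bar> \<le> r\<^sup>2 / 2
      \<Longrightarrow> koranyi_dist (hmult (hmult (w1, w2) (g, 0)) (0, a)) (x, t) < (real (dim V) + 2) * r"
proof
  have V: "subspace V" using hV by (simp add: horizontal_subspace_def)
  define P where "P = orth_proj V x"
  define e where "e = t - 2 * omega x P - w2"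
  have P: "P \<in> V" "norm P \<le> R" "norm (x - P) \<le> R"
    using orth_proj_in[OF V] norm_orth_proj_le[OF V, of x] norm_diff_orth_proj_le[OF V, of x] assms(2)
    by (simp_all add: P_def)
  have \<delta>: "norm (x - P - w1) < r" and e: "\<bar>e\<bar> < r"
    using dist_proj_perp_lt_components[OF hV close] by (simp_all add: P_def e_def)
  have "omega P g = 0"
    using hV P(1) \<open>g \<in> V\<close> by (simp add: horizontal_subspace_def)
  have "norm w1 \<le> R + 1"
    using norm_triangle_ineq4[of "x - P" "x - P - w1"] P(3) \<delta> \<open>r \<le> 1\<close> by simp
  moreover have "norm g \<le> R + real (dim V)"
  proof -
    have "real (dim V) * r \<le> real (dim V)"
      using \<open>r \<le> 1\<close> by (simp add: mult_left_le)
    then show ?thesis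
      using norm_triangle_ineq4[of P "P - g"] P(2) assms(7) by (simp add: P_def)
  qed
  ultimately have "norm (P + w1 + g) \<le> 3 * R + real (dim V) + 1"
    using norm_triangle_ineq[of "P + w1" g] norm_triangle_ineq[of P w1] P(2) by linarith
  then have "norm (x - P - w1) * norm (P + w1 + g) \<le> r * (3 * R + real (dim V) + 1)"
    using \<delta> \<open>0 < r\<close> by (intro mult_mono) auto
  then have "\<bar>omega (x - P - w1) (P + w1 + g)\<bar> \<le> r * (3 * R + real (dim V) + 1)"
    using abs_omega_le[of "x - P - w1" "P + w1 + g"] by linarith
  moreover have "r * (6 * R + 2 * real (dim V) + 3) = r + 2 * (r * (3 * R + real (dim V) + 1))"
    by (simp add: algebra_simps)
  ultimately show "\<bar>e + 2 * omega (x - P - w1) (P + w1 + g)\<bar> \<le> r * (6 * R + 2 * real (dim V) + 3)"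
    using e by linarith
  show "koranyi_dist (hmult (hmult (w1, w2) (g, 0)) (0, a)) (x, t) < (real (dim V) + 2) * r"
    if "\<bar>a - (e + 2 * omega (x - P - w1) (P + w1 + g))\<bar> \<le> r\<^sup>2 / 2" for a
    using koranyi_dist_cover_centre_lt[OF \<open>omega P g = 0\<close> \<delta>, of "real (dim V)"] that assms(7)
    by (simp add: P_def e_def)
qed

definition cover_centres :: "'n::finite heis \<Rightarrow> 'n hvec set \<Rightarrow> real \<Rightarrow> int \<Rightarrow> 'n heis set" where
  "cover_centres w G r N = (\<lambda>(g, j). hmult (hmult w (g, 0)) (0, of_int j * r\<^sup>2)) ` (G \<times> {-N..N})"

lemma
  assumes "finite G"
  shows finite_cover_centres: "finite (cover_centres w G r N)"
    and card_cover_centres_le: "real (card (cover_centres w G r N)) \<le> real (card G) * real (card {-N..N})"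
proof -
  show "finite (cover_centres w G r N)"
    using assms by (simp add: cover_centres_def)
  have "card (cover_centres w G r N) \<le> card G * card {-N..N}"
    unfolding cover_centres_def using card_image_le[of "G \<times> {-N..N}"] assms
    by (simp add: card_cartesian_product)
  then show "real (card (cover_centres w G r N)) \<le> real (card G) * real (card {-N..N})"
    by (metis of_nat_le_iff of_nat_mult)
qed

lemma proj_perp_preimage_ball_subset_cover_centres:
  fixes V :: "'n::finite hvec set" and K :: "'n heis set"
  assumes hV: "horizontal_subspace V" and K: "\<forall>p\<in>K. norm p \<le> R" and r: "0 < r" "r \<le> 1"
    and G: "G \<subseteq> V" "\<And>v. v \<in> V \<Longrightarrow> norm v \<le> R \<Longrightarrow> \<exists>g\<in>G. norm (v - g) \<le> real (dim V) * r"
    and N: "\<And>u. \<bar>u\<bar> \<le> r * (6 * R + 2 * real (dim V) + 3) \<Longrightarrow> round (u / r\<^sup>2) \<in> {-N..N}"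
  shows "{p\<in>K. dist w (proj_perp V p) < r}
    \<subseteq> (\<Union>c\<in>cover_centres w G r N. {p. koranyi_dist c p < (real (dim V) + 2) * r})"
proof
  have V: "subspace V" using hV by (simp add: horizontal_subspace_def)
  fix p assume "p \<in> {p\<in>K. dist w (proj_perp V p) < r}"
  then have "norm p \<le> R" and close: "dist w (proj_perp V p) < r"
    using K by auto
  obtain x t where p: "p = (x, t)" by (cases p) auto
  obtain w1 w2 where w: "w = (w1, w2)" by (cases w) auto
  have "norm x \<le> R"
    using order_trans[OF norm_fst_le[of x t]] \<open>norm p \<le> R\<close> p by blast
  then obtain g where g: "g \<in> G" "norm (orth_proj V x - g) \<le> real (dim V) * r"
    using G(2)[OF orth_proj_in[OF V]] order_trans[OF norm_orth_proj_le[OF V]] by blast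
  have "dist (w1, w2) (proj_perp V (x, t)) < r"
    using close by (simp add: w p)
  then obtain Q where Q: "\<bar>Q\<bar> \<le> r * (6 * R + 2 * real (dim V) + 3)"
    "\<And>a. \<bar>a - Q\<bar> \<le> r\<^sup>2 / 2 \<Longrightarrow>
      koranyi_dist (hmult (hmult (w1, w2) (g, 0)) (0, a)) (x, t) < (real (dim V) + 2) * r"
    using proj_perp_fibre_near_cover_centre[OF hV \<open>norm x \<le> R\<close> r _ subsetD[OF G(1) g(1)] g(2)]
    by blast
  define j where "j = round (Q / r\<^sup>2)"
  have "hmult (hmult w (g, 0)) (0, of_int j * r\<^sup>2) \<in> cover_centres w G r N"
    unfolding cover_centres_def
    by (rule image_eqI[where x="(g, j)"]) (use g(1) N[OF Q(1)] in \<open>simp_all add: j_def\<close>)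
  moreover have "\<bar>of_int j * r\<^sup>2 - Q\<bar> \<le> r\<^sup>2 / 2"
    using abs_round_divide_mult_le[of "r\<^sup>2" Q] r by (simp add: j_def mult.commute)
  ultimately show "p \<in> (\<Union>c\<in>cover_centres w G r N. {p. koranyi_dist c p < (real (dim V) + 2) * r})"
    using Q(2) by (auto simp: w p)
qed

lemma powr_minus_of_nat_add_one:
  fixes r :: real
  assumes "0 < r"
  shows "r powr (- (real n + 1)) = 1 / r ^ (n + 1)"
proof -
  have "r powr (real n + 1) = r ^ (n + 1)"
    using powr_realpow[OF assms, of "n + 1"] by (simp add: add.commute)
  then show ?thesis
    using powr_minus[of r "real n + 1"] by (simp add: inverse_eq_divide)
qed

lemma proj_perp_preimage_ball_cover:
  fixes V :: "'n::finite hvec set" and K :: "'n heis set"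
  assumes hV: "horizontal_subspace V" and "1 \<le> R" and K: "\<forall>p\<in>K. norm p \<le> R"
    and r: "0 < r" "r \<le> 1"
  defines "M \<equiv> 6 * R + 2 * real (dim V) + 3"
  obtains F where "finite F"
    "real (card F) \<le> (2 * R + 5) ^ dim V * (2 * M + 5) * r powr (- (real (dim V) + 1))"
    "{p\<in>K. dist w (proj_perp V p) < r}
      \<subseteq> (\<Union>c\<in>F. {p. koranyi_dist c p < (real (dim V) + 2) * r})"
proof -
  have V: "subspace V" using hV by (simp add: horizontal_subspace_def)
  obtain G where G: "finite G" "G \<subseteq> V" "real (card G) \<le> (2 * R / r + 5) ^ dim V"
    "\<And>v. v \<in> V \<Longrightarrow> norm v \<le> R \<Longrightarrow> \<exists>g\<in>G. norm (v - g) \<le> real (dim V) * r"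
    using subspace_grid_cover[OF V r(1), of R] \<open>1 \<le> R\<close> by auto
  have "0 < r\<^sup>2" "0 \<le> r * M"
    using r \<open>1 \<le> R\<close> by (simp_all add: M_def)
  then obtain N :: int where N: "real (card {-N..N}) \<le> 2 * (r * M) / r\<^sup>2 + 5"
    "\<And>u. \<bar>u\<bar> \<le> r * M \<Longrightarrow> round (u / r\<^sup>2) \<in> {-N..N}"
    using round_divide_bounded by metis
  have "5 \<le> 5 / r" using r by (simp add: le_divide_eq)
  have "real (card (cover_centres w G r N)) \<le> real (card G) * real (card {-N..N})"
    using G(1) by (rule card_cover_centres_le)
  also have "\<dots> \<le> ((2 * R + 5) / r) ^ dim V * ((2 * M + 5) / r)"
  proof (rule mult_mono)
    have "(2 * R / r + 5) ^ dim V \<le> ((2 * R + 5) / r) ^ dim V"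
      using \<open>5 \<le> 5 / r\<close> r \<open>1 \<le> R\<close> by (intro power_mono) (simp_all add: add_divide_distrib)
    then show "real (card G) \<le> ((2 * R + 5) / r) ^ dim V"
      using G(3) by linarith
    show "real (card {-N..N}) \<le> (2 * M + 5) / r"
      using N(1) \<open>5 \<le> 5 / r\<close> r by (simp add: power2_eq_square add_divide_distrib)
  qed (use r \<open>1 \<le> R\<close> in simp_all)
  also have "\<dots> = (2 * R + 5) ^ dim V * (2 * M + 5) * r powr (- (real (dim V) + 1))"
    using powr_minus_of_nat_add_one[OF r(1), of "dim V"] by (simp add: power_divide)
  finally show ?thesis
    using that finite_cover_centres[OF G(1)]
      proj_perp_preimage_ball_subset_cover_centres[OF hV K r G(2,4) N(2)[unfolded M_def]]
    by blast
qed

lemma proj_perp_preimage_cover_on_bounded: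
  fixes V :: "'n::finite hvec set" and K :: "'n heis set"
  assumes hV: "horizontal_subspace V" and "1 \<le> R" and K: "\<forall>p\<in>K. norm p \<le> R"
  shows "\<exists>C\<ge>1. \<exists>r0>0. \<forall>w\<in>hsub_perp V. \<forall>r. 0 < r \<and> r < r0 \<longrightarrow>
    (\<exists>F. finite F \<and> F \<subseteq> UNIV \<and> real (card F) \<le> C * r powr (- (real (dim V) + 1)) \<and>
      {p\<in>K. proj_perp V p \<in> Metric_space.mball (hsub_perp V) dist w r}
        \<subseteq> (\<Union>c\<in>F. Metric_space.mball UNIV koranyi_dist c (C * r)))"
proof -
  define C0 where "C0 = (2 * R + 5) ^ dim V * (2 * (6 * R + 2 * real (dim V) + 3) + 5)"
  have "0 \<le> C0" using \<open>1 \<le> R\<close> by (simp add: C0_def)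
  have "\<exists>F. finite F \<and> F \<subseteq> UNIV \<and> real (card F) \<le> (real (dim V) + 2 + C0) * r powr (- (real (dim V) + 1)) \<and>
      {p\<in>K. proj_perp V p \<in> Metric_space.mball (hsub_perp V) dist w r}
        \<subseteq> (\<Union>c\<in>F. Metric_space.mball UNIV koranyi_dist c ((real (dim V) + 2 + C0) * r))"
    if r: "0 < r" "r \<le> 1" for w r
  proof -
    obtain F where F: "finite F" "real (card F) \<le> C0 * r powr (- (real (dim V) + 1))"
      "{p\<in>K. dist w (proj_perp V p) < r} \<subseteq> (\<Union>c\<in>F. {p. koranyi_dist c p < (real (dim V) + 2) * r})"
      using proj_perp_preimage_ball_cover[OF hV \<open>1 \<le> R\<close> K r] unfolding C0_def by blast
    have "real (card F) \<le> (real (dim V) + 2 + C0) * r powr (- (real (dim V) + 1))"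
      using F(2) by (simp add: distrib_right add_increasing)
    moreover have "(real (dim V) + 2) * r \<le> (real (dim V) + 2 + C0) * r"
      using r \<open>0 \<le> C0\<close> by (intro mult_right_mono) auto
    then have "{p\<in>K. proj_perp V p \<in> Metric_space.mball (hsub_perp V) dist w r}
        \<subseteq> (\<Union>c\<in>F. Metric_space.mball UNIV koranyi_dist c ((real (dim V) + 2 + C0) * r))"
      using F(3) Metric_space.in_mball[OF Met_TC.subspace[of "hsub_perp V"]] by fastforce
    ultimately show ?thesis
      using F(1) by blast
  qed
  then show ?thesis
    using \<open>0 \<le> C0\<close>
    by (intro exI[of _ "real (dim V) + 2 + C0"] exI[of _ 1] conjI ballI allI impI) auto
qed

theorem proposition6p4:
  fixes V :: "'n::finite hvec set"
  assumes "horizontal_subspace V"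
  shows "locally_DS_regular (UNIV :: 'n heis set) koranyi_dist (hsub_perp V) dist
           (proj_perp V) (real (dim V) + 1)"
proof -
  have bounded: "\<exists>R\<ge>1. \<forall>p\<in>K. norm p \<le> R" if K: "compactin Koranyi.mtopology K" for K
  proof -
    obtain B where "\<forall>p\<in>K. norm p \<le> B"
      using compactin_koranyi_imp_compact[OF K] compact_imp_bounded bounded_iff by metis
    then show ?thesis
      by (intro exI[of _ "max 1 B"]) auto
  qed
  show ?thesis
    unfolding locally_DS_regular_def
  proof (intro conjI allI impI)
    show "proj_perp V ` UNIV = hsub_perp V"
      by (rule proj_perp_image[OF assms])
    fix K :: "'n heis set"
    assume "K \<subseteq> UNIV \<and> compactin Koranyi.mtopology K"
    then obtain R where R: "1 \<le> R" "\<forall>p\<in>K. norm p \<le> R"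
      using bounded by blast
    then show "\<exists>L. \<forall>p\<in>K. \<forall>q\<in>K. dist (proj_perp V p) (proj_perp V q) \<le> L * koranyi_dist p q"
      using dist_proj_perp_le_koranyi_dist[OF assms] by (intro exI[of _ "1 + 10 * R"]) auto
  qed (elim conjE, drule bounded, elim exE conjE, rule proj_perp_preimage_cover_on_bounded[OF assms])
qed

end
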